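(* If $G$ is a connected graph, then $D(G)\le \dim(G)+1$. Moreover, the bound is sharp (e.g. equality holds for every path $P_n$, $n\ge 2$).
   Context: All graphs are finite and simple. For a connected graph $G$ with shortest-path distance $d_G$, a set $S\subseteq V(G)$ is resolving if for any two distinct vertices $x,y$ there is $s\in S$ with $d_G(x,s)\neq d_G(y,s)$; the metric dimension $\dim(G)$ is the minimum size of a resolving set. A distinguishing coloring of a graph $G$ is a (not necessarily proper) vertex coloring such that the only automorphism of $G$ mapping every vertex to a vertex of the same color is the identity; the distinguishing number $D(G)$ is the minimum number of colors in a distinguishing coloring of $G$. *)

theory Defs
  imports Main
begin

definition simple_graph :: "'a set \<Rightarrow> ('a \<Rightarrow> 'a \<Rightarrow> bool) \<Rightarrow> bool" where
  "simple_graph V E \<longleftrightarrow> finite V \<and> (\<forall>x y. E x y \<longrightarrow> x \<in> V \<and> y \<in> V)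
     \<and> (\<forall>x y. E x y \<longrightarrow> E y x) \<and> (\<forall>x. \<not> E x x)"

definition is_walk :: "'a set \<Rightarrow> ('a \<Rightarrow> 'a \<Rightarrow> bool) \<Rightarrow> 'a list \<Rightarrow> bool" where
  "is_walk V E xs \<longleftrightarrow> xs \<noteq> [] \<and> set xs \<subseteq> V
     \<and> (\<forall>i. Suc i < length xs \<longrightarrow> E (xs ! i) (xs ! Suc i))"

definition connected_graph :: "'a set \<Rightarrow> ('a \<Rightarrow> 'a \<Rightarrow> bool) \<Rightarrow> bool" where
  "connected_graph V E \<longleftrightarrow> simple_graph V E \<and> V \<noteq> {} \<and>
     (\<forall>x\<in>V. \<forall>y\<in>V. \<exists>xs. is_walk V E xs \<and> hd xs = x \<and> last xs = y)"

definition gdist :: "'a set \<Rightarrow> ('a \<Rightarrow> 'a \<Rightarrow> bool) \<Rightarrow> 'a \<Rightarrow> 'a \<Rightarrow> nat" where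
  "gdist V E x y = (LEAST n. \<exists>xs. is_walk V E xs \<and> hd xs = x \<and> last xs = y
                                 \<and> length xs = Suc n)"

definition resolving :: "'a set \<Rightarrow> ('a \<Rightarrow> 'a \<Rightarrow> bool) \<Rightarrow> 'a set \<Rightarrow> bool" where
  "resolving V E S \<longleftrightarrow> S \<subseteq> V \<and>
     (\<forall>x\<in>V. \<forall>y\<in>V. x \<noteq> y \<longrightarrow> (\<exists>s\<in>S. gdist V E x s \<noteq> gdist V E y s))"

definition metric_dim :: "'a set \<Rightarrow> ('a \<Rightarrow> 'a \<Rightarrow> bool) \<Rightarrow> nat" where
  "metric_dim V E = (LEAST k. \<exists>S. resolving V E S \<and> card S = k)"

definition automorphism :: "'a set \<Rightarrow> ('a \<Rightarrow> 'a \<Rightarrow> bool) \<Rightarrow> ('a \<Rightarrow> 'a) \<Rightarrow> bool" where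
  "automorphism V E f \<longleftrightarrow> bij_betw f V V \<and> (\<forall>x\<in>V. \<forall>y\<in>V. E x y \<longleftrightarrow> E (f x) (f y))"

definition distinguishing :: "'a set \<Rightarrow> ('a \<Rightarrow> 'a \<Rightarrow> bool) \<Rightarrow> ('a \<Rightarrow> nat) \<Rightarrow> bool" where
  "distinguishing V E c \<longleftrightarrow>
     (\<forall>f. automorphism V E f \<and> (\<forall>v\<in>V. c (f v) = c v) \<longrightarrow> (\<forall>v\<in>V. f v = v))"

definition distinguishing_number :: "'a set \<Rightarrow> ('a \<Rightarrow> 'a \<Rightarrow> bool) \<Rightarrow> nat" where
  "distinguishing_number V E =
     (LEAST k. \<exists>c. (\<forall>v\<in>V. c v < k) \<and> distinguishing V E c)"

definition path_V :: "nat \<Rightarrow> nat set" where "path_V n = {..<n}"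
definition path_E :: "nat \<Rightarrow> nat \<Rightarrow> nat \<Rightarrow> bool" where
  "path_E n i j \<longleftrightarrow> i < n \<and> j < n \<and> (j = Suc i \<or> i = Suc j)"

end

theory Submission
  imports Defs
begin

text \<open>An automorphism preserves distances, so an automorphism fixing every vertex of a
resolving set S fixes every vertex: the distance vector to S of f v equals that of v.
Colouring the vertices of a minimum resolving set with distinct colours 1, ..., dim G and
all other vertices with colour 0 is therefore distinguishing. For the path P_n the end
vertex 0 alone resolves, while the reflection i \<mapsto> n - 1 - i is a nontrivial
automorphism, so a single colour never suffices.\<close>

lemma automorphism_walk:
  assumes "automorphism V E f" "is_walk V E xs"
  shows "is_walk V E (map f xs)"
proof -
  have fV: "f x \<in> V" if "x \<in> V" for x
    using assms(1) that unfolding automorphism_def bij_betw_def by auto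
  have "E (f (xs ! i)) (f (xs ! Suc i))" if "Suc i < length xs" for i
  proof -
    have "xs ! i \<in> V" "xs ! Suc i \<in> V" "E (xs ! i) (xs ! Suc i)"
      using assms(2) that nth_mem[of i xs] nth_mem[of "Suc i" xs] unfolding is_walk_def by auto
    then show ?thesis using assms(1) unfolding automorphism_def by blast
  qed
  then show ?thesis using assms(2) fV unfolding is_walk_def by auto
qed

lemma automorphism_inv_into:
  assumes "automorphism V E f"
  shows "automorphism V E (inv_into V f)"
proof -
  have f: "bij_betw f V V" using assms unfolding automorphism_def by auto
  have g: "bij_betw (inv_into V f) V V" using bij_betw_inv_into[OF f] .
  have "E x y \<longleftrightarrow> E (inv_into V f x) (inv_into V f y)" if "x \<in> V" "y \<in> V" for x y
  proof -
    have "inv_into V f x \<in> V" "inv_into V f y \<in> V" using g that bij_betwE by blast+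
    moreover have "f (inv_into V f x) = x" "f (inv_into V f y) = y"
      using f that by (meson bij_betw_inv_into_right)+
    ultimately show ?thesis using assms unfolding automorphism_def by metis
  qed
  then show ?thesis using g unfolding automorphism_def by auto
qed

lemma gdist_automorphism:
  assumes f: "automorphism V E f" and "x \<in> V" "y \<in> V"
  shows "gdist V E (f x) (f y) = gdist V E x y"
proof -
  let ?walk_length = "\<lambda>a b n. \<exists>xs. is_walk V E xs \<and> hd xs = a \<and> last xs = b \<and> length xs = Suc n"
  have mapped: "?walk_length (g a) (g b) n"
    if g: "automorphism V E g" and walk: "?walk_length a b n" for g a b n
  proof -
    obtain xs where "is_walk V E xs" "hd xs = a" "last xs = b" "length xs = Suc n"
      using walk by blast
    then show ?thesis using automorphism_walk[OF g]
      by (intro exI[of _ "map g xs"]) (auto simp: is_walk_def hd_map last_map)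
  qed
  have "inv_into V f (f z) = z" if "z \<in> V" for z
    using f that unfolding automorphism_def by (meson bij_betw_inv_into_left)
  then have "?walk_length (f x) (f y) n \<longleftrightarrow> ?walk_length x y n" for n
    using mapped[OF f, of x y n] mapped[OF automorphism_inv_into[OF f], of "f x" "f y" n]
      assms(2,3) by (intro iffI) simp_all
  then show ?thesis unfolding gdist_def by simp
qed

lemma gdist_self:
  assumes "x \<in> V"
  shows "gdist V E x x = 0"
  unfolding gdist_def
  by (rule Least_equality, rule exI[of _ "[x]"]) (use assms in \<open>auto simp: is_walk_def\<close>)

lemma gdist_eq_0_imp_eq:
  assumes "connected_graph V E" "x \<in> V" "y \<in> V" "gdist V E x y = 0"
  shows "x = y"
proof -
  obtain xs where xs: "is_walk V E xs" "hd xs = x" "last xs = y"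
    using assms unfolding connected_graph_def by blast
  then have "length xs = Suc (length xs - 1)" unfolding is_walk_def by auto
  then have "\<exists>n xs. is_walk V E xs \<and> hd xs = x \<and> last xs = y \<and> length xs = Suc n"
    using xs by blast
  from LeastI_ex[OF this] assms(4) obtain ys where
    "hd ys = x" "last ys = y" "length ys = Suc 0"
    unfolding gdist_def by auto
  then show ?thesis by (cases ys) auto
qed

lemma resolving_vertex_set:
  assumes "connected_graph V E"
  shows "resolving V E V"
  unfolding resolving_def
proof (intro conjI ballI impI)
  fix x y assume "x \<in> V" "y \<in> V" "x \<noteq> y"
  then show "\<exists>s\<in>V. gdist V E x s \<noteq> gdist V E y s"
    using gdist_self[of x V E] gdist_eq_0_imp_eq[OF assms, of y x] by (intro bexI[of _ x]) auto
qed simp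

lemma metric_dim_attained:
  assumes "connected_graph V E"
  obtains S where "resolving V E S" "card S = metric_dim V E"
proof -
  have "\<exists>k S. resolving V E S \<and> card S = k" using resolving_vertex_set[OF assms] by blast
  from LeastI_ex[OF this] show ?thesis using that unfolding metric_dim_def by blast
qed

lemma metric_dim_le:
  assumes "resolving V E S"
  shows "metric_dim V E \<le> card S"
  unfolding metric_dim_def by (rule Least_le) (use assms in blast)

lemma metric_dim_pos:
  assumes "connected_graph V E" "x \<in> V" "y \<in> V" "x \<noteq> y"
  shows "0 < metric_dim V E"
proof -
  obtain S where S: "resolving V E S" "card S = metric_dim V E"
    using metric_dim_attained[OF assms(1)] .
  have "S \<noteq> {}" using S(1) assms(2-4) unfolding resolving_def by blast
  moreover have "finite V" using assms(1) unfolding connected_graph_def simple_graph_def by blast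
  then have "finite S" using S(1) finite_subset unfolding resolving_def by blast
  ultimately show ?thesis using S(2) card_gt_0_iff by metis
qed

lemma automorphism_fixing_resolving_set:
  assumes "resolving V E S" "automorphism V E f" "\<forall>s\<in>S. f s = s" "v \<in> V"
  shows "f v = v"
proof (rule ccontr)
  assume "f v \<noteq> v"
  moreover have "f v \<in> V" using assms(2,4) unfolding automorphism_def bij_betw_def by auto
  ultimately obtain s where s: "s \<in> S" "gdist V E (f v) s \<noteq> gdist V E v s"
    using assms(1,4) unfolding resolving_def by blast
  moreover have "s \<in> V" using assms(1) s(1) unfolding resolving_def by auto
  then have "gdist V E (f v) (f s) = gdist V E v s" by (rule gdist_automorphism[OF assms(2,4)])
  ultimately show False using assms(3) by simp
qed

lemma distinguishing_if_resolving_colours_unique: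
  assumes "resolving V E S" and unique: "\<forall>s\<in>S. \<forall>v\<in>V. c v = c s \<longrightarrow> v = s"
  shows "distinguishing V E c"
  unfolding distinguishing_def
proof (intro allI impI ballI)
  fix f v assume f: "automorphism V E f \<and> (\<forall>v\<in>V. c (f v) = c v)" and v: "v \<in> V"
  have "f s = s" if s: "s \<in> S" for s
  proof -
    have "s \<in> V" using assms(1) s unfolding resolving_def by auto
    moreover from this have "f s \<in> V" using f unfolding automorphism_def bij_betw_def by auto
    ultimately show ?thesis using f unique s by simp
  qed
  then show "f v = v" using automorphism_fixing_resolving_set[OF assms(1) _ _ v] f by simp
qed

lemma distinguishing_colouring_from_resolving_set:
  assumes "resolving V E S" "finite S"
  shows "\<exists>c. (\<forall>v\<in>V. c v < card S + 1) \<and> distinguishing V E c"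
proof -
  obtain h where h: "bij_betw h S {0..<card S}" using ex_bij_betw_finite_nat[OF assms(2)] by blast
  define c where "c v = (if v \<in> S then h v + 1 else 0)" for v
  have "\<forall>s\<in>S. \<forall>v\<in>V. c v = c s \<longrightarrow> v = s"
    using h unfolding c_def bij_betw_def inj_on_def by (simp split: if_splits)
  moreover have "\<forall>v\<in>V. c v < card S + 1" using h unfolding c_def bij_betw_def by auto
  ultimately show ?thesis using distinguishing_if_resolving_colours_unique[OF assms(1)] by blast
qed

lemma distinguishing_colouring_with_metric_dim:
  assumes "connected_graph V E"
  shows "\<exists>c. (\<forall>v\<in>V. c v < metric_dim V E + 1) \<and> distinguishing V E c"
proof -
  obtain S where S: "resolving V E S" "card S = metric_dim V E"
    using metric_dim_attained[OF assms] .
  have "finite V" using assms unfolding connected_graph_def simple_graph_def by blast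
  then have "finite S" using S(1) finite_subset unfolding resolving_def by blast
  then show ?thesis using distinguishing_colouring_from_resolving_set[OF S(1)] S(2) by simp
qed

theorem distinguishing_number_le_metric_dim:
  assumes "connected_graph V E"
  shows "distinguishing_number V E \<le> metric_dim V E + 1"
  unfolding distinguishing_number_def
  by (rule Least_le) (use distinguishing_colouring_with_metric_dim[OF assms] in blast)

lemma distinguishing_number_ge_2:
  assumes "connected_graph V E" "automorphism V E f" "v \<in> V" "f v \<noteq> v"
  shows "2 \<le> distinguishing_number V E"
proof -
  have "\<exists>k c. (\<forall>v\<in>V. c v < k) \<and> distinguishing V E c"
    using distinguishing_colouring_with_metric_dim[OF assms(1)] by blast
  from LeastI_ex[OF this] obtain c where
    c: "\<forall>v\<in>V. c v < distinguishing_number V E" "distinguishing V E c"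
    unfolding distinguishing_number_def by blast
  show ?thesis
  proof (rule ccontr)
    assume "\<not> 2 \<le> distinguishing_number V E"
    then have "\<forall>v\<in>V. c v = 0" using c(1) by fastforce
    moreover have "f ` V \<subseteq> V" using assms(2) unfolding automorphism_def bij_betw_def by auto
    ultimately have "\<forall>v\<in>V. c (f v) = c v" by auto
    then show False using c(2) assms(2-4) unfolding distinguishing_def by blast
  qed
qed

lemma path_walk_up:
  assumes "x \<le> y" "y < n"
  shows "is_walk (path_V n) (path_E n) [x..<Suc y]"
  using assms unfolding is_walk_def path_V_def path_E_def by (auto simp del: upt_Suc simp: nth_upt)

lemma path_walk_down:
  assumes "x \<le> y" "y < n"
  shows "is_walk (path_V n) (path_E n) (rev [x..<Suc y])"
  using assms unfolding is_walk_def path_V_def path_E_def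
  by (auto simp del: upt_Suc simp: rev_nth nth_upt)

lemma path_connected:
  assumes "n \<ge> 2"
  shows "connected_graph (path_V n) (path_E n)"
  unfolding connected_graph_def
proof (intro conjI ballI)
  show "simple_graph (path_V n) (path_E n)"
    unfolding simple_graph_def path_V_def path_E_def by auto
  have "0 \<in> path_V n" using assms unfolding path_V_def by simp
  then show "path_V n \<noteq> {}" by blast
next
  fix x y assume x: "x \<in> path_V n" and y: "y \<in> path_V n"
  show "\<exists>xs. is_walk (path_V n) (path_E n) xs \<and> hd xs = x \<and> last xs = y"
  proof (cases "x \<le> y")
    case True
    then show ?thesis using path_walk_up[of x y n] y
      by (intro exI[of _ "[x..<Suc y]"]) (auto simp del: upt_Suc simp: path_V_def hd_upt)
  next
    case False
    then show ?thesis using path_walk_down[of y x n] x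
      by (intro exI[of _ "rev [y..<Suc x]"])
        (auto simp del: upt_Suc simp: path_V_def hd_rev last_rev hd_upt)
  qed
qed

lemma path_walk_hd_le:
  assumes "is_walk (path_V n) (path_E n) xs" "k < length xs"
  shows "xs ! 0 \<le> xs ! k + k"
  using assms(2)
proof (induction k)
  case (Suc k)
  then have "path_E n (xs ! k) (xs ! Suc k)" using assms(1) unfolding is_walk_def by auto
  then show ?case using Suc unfolding path_E_def by auto
qed simp

lemma path_gdist_0:
  assumes "i < n"
  shows "gdist (path_V n) (path_E n) i 0 = i"
  unfolding gdist_def
proof (rule Least_equality)
  show "\<exists>xs. is_walk (path_V n) (path_E n) xs \<and> hd xs = i \<and> last xs = 0 \<and> length xs = Suc i"
    using path_walk_down[of 0 i n] assms
    by (intro exI[of _ "rev [0..<Suc i]"]) (auto simp: hd_rev last_rev)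
next
  fix m
  assume "\<exists>xs. is_walk (path_V n) (path_E n) xs \<and> hd xs = i \<and> last xs = 0 \<and> length xs = Suc m"
  then obtain xs where xs: "is_walk (path_V n) (path_E n) xs" "hd xs = i" "last xs = 0"
    "length xs = Suc m"
    by blast
  have "xs ! 0 = i" using xs(2,4) by (cases xs) auto
  moreover have "xs ! m = 0" using xs(3,4) last_conv_nth[of xs] by (cases xs) auto
  ultimately show "i \<le> m" using path_walk_hd_le[OF xs(1), of m] xs(4) by simp
qed

lemma path_metric_dim:
  assumes "n \<ge> 2"
  shows "metric_dim (path_V n) (path_E n) = 1"
proof -
  have "resolving (path_V n) (path_E n) {0}"
    using assms path_gdist_0 unfolding resolving_def path_V_def by auto
  then have "metric_dim (path_V n) (path_E n) \<le> 1" using metric_dim_le by fastforce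
  moreover have "0 < metric_dim (path_V n) (path_E n)"
    using metric_dim_pos[OF path_connected[OF assms], of 0 1] assms by (simp add: path_V_def)
  ultimately show ?thesis by simp
qed

lemma path_reflection_automorphism:
  "automorphism (path_V n) (path_E n) (\<lambda>i. n - 1 - i)"
  unfolding automorphism_def
proof
  show "bij_betw (\<lambda>i. n - 1 - i) (path_V n) (path_V n)"
    unfolding path_V_def
    by (rule bij_betw_byWitness[where f' = "\<lambda>i. n - 1 - i"]) auto
  show "\<forall>x\<in>path_V n. \<forall>y\<in>path_V n. path_E n x y = path_E n (n - 1 - x) (n - 1 - y)"
    unfolding path_V_def path_E_def by (intro ballI) (simp, arith)
qed

theorem proposition3p1:
  shows "(\<forall>(V :: 'a set) E. connected_graph V E \<longrightarrow>
            distinguishing_number V E \<le> metric_dim V E + 1)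
         \<and> (\<forall>n\<ge>2. connected_graph (path_V n) (path_E n) \<and>
            distinguishing_number (path_V n) (path_E n) = metric_dim (path_V n) (path_E n) + 1)"
proof (intro conjI allI impI)
  fix V :: "'a set" and E
  assume "connected_graph V E"
  then show "distinguishing_number V E \<le> metric_dim V E + 1"
    by (rule distinguishing_number_le_metric_dim)
next
  fix n :: nat
  assume n: "n \<ge> 2"
  then show connected: "connected_graph (path_V n) (path_E n)" by (rule path_connected)
  have "2 \<le> distinguishing_number (path_V n) (path_E n)"
    using distinguishing_number_ge_2[OF connected path_reflection_automorphism, of 0] n
    by (simp add: path_V_def)
  moreover have "distinguishing_number (path_V n) (path_E n) \<le> 2"
    using distinguishing_number_le_metric_dim[OF connected] path_metric_dim[OF n] by simp
  ultimately show "distinguishing_number (path_V n) (path_E n) = metric_dim (path_V n) (path_E n) + 1"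
    using path_metric_dim[OF n] by simp
qed

end
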